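(* Assume that $(a,b,c)\in\mathcal A_{\mathbf k}$. Then \[ b_1\geq p-1-(a+(k_1-1)c), \qquad b_s\geq (k_{s-1}-k_s+1)c-1, \quad s=2,\dots,n. \]
   Context: Let $p$ be an odd prime. Let $\mathbf k=(k_1,\dots,k_n)\in\mathbb Z_{>0}^n$ with $k_i>k_{i+1}$ for $i=1,\dots,n-1$, and set $k_0=k_{n+1}=0$. Let $a,b_1,\dots,b_n,c\in\mathbb Z_{>0}$, $b=(b_1,\dots,b_n)$, and put $a_1=a$, $a_2=\dots=a_n=0$; $\delta_{s,1}$ is $1$ if $s=1$ and $0$ otherwise. Define \[ R_{\mathbf k}(a,b,c)=\prod_{1\le s\le r\le n}\prod_{i=1}^{k_r-k_{r+1}}\frac{(r-s+b_s+\dots+b_r+(i+s-r-1)c)!}{(r-s+1+a_s+b_s+\dots+b_r+(i+s-r+k_s-k_{s-1}-2)c-\delta_{s,1}p)!} \] \[ \times(-1)^{\sum_{i=1}^n k_i}\Big(\prod_{i=1}^{k_1}(a_1+(i-1)c)!\Big)\Big(\prod_{r=1}^n\prod_{i=1}^{k_r}\frac{(ic)!}{c!}\Big)\Big(\prod_{r=2}^n\prod_{i=1}^{k_r}(p+(i-k_{r-1}-1)c)!\Big). \] The tuple $(a,b_1,\dots,b_n,c)$ is called admissible if $a+(k_1-1)c<p-1$ and for every factorial $x!$ appearing in the right-hand side of the formula for $R_{\mathbf k}(a,b,c)$ one has $0\le x<p$. The set of all admissible $(a,b,c)$ is denoted $\mathcal A_{\mathbf k}$. *)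

theory Defs
  imports "HOL-Computational_Algebra.Primes"
begin

text \<open>The strictly decreasing tuple k = (k_1,...,k_n) is a function nat => nat used on
  indices 1..n; kx extends it by k_0 = k_(n+1) = 0 (as integers).\<close>
definition kx :: "nat \<Rightarrow> (nat \<Rightarrow> nat) \<Rightarrow> nat \<Rightarrow> int" where
  "kx n k i = (if 1 \<le> i \<and> i \<le> n then int (k i) else 0)"

definition ax :: "nat \<Rightarrow> nat \<Rightarrow> int" where
  "ax a s = (if s = 1 then int a else 0)"

definition bsum :: "(nat \<Rightarrow> nat) \<Rightarrow> nat \<Rightarrow> nat \<Rightarrow> int" where
  "bsum b s r = (\<Sum>j=s..r. int (b j))"

text \<open>The set of all integers x such that x! appears in the formula for R_k(a,b,c).\<close>
definition fact_args :: "nat \<Rightarrow> nat \<Rightarrow> (nat \<Rightarrow> nat) \<Rightarrow> nat \<Rightarrow> (nat \<Rightarrow> nat) \<Rightarrow> nat \<Rightarrow> int set" where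
  "fact_args p n k a b c =
     {int r - int s + bsum b s r + (int i + int s - int r - 1) * int c
        | s r i. 1 \<le> s \<and> s \<le> r \<and> r \<le> n \<and> 1 \<le> int i \<and> int i \<le> kx n k r - kx n k (r+1)}
   \<union> {int r - int s + 1 + ax a s + bsum b s r
        + (int i + int s - int r + kx n k s - kx n k (s-1) - 2) * int c
        - (if s = 1 then int p else 0)
        | s r i. 1 \<le> s \<and> s \<le> r \<and> r \<le> n \<and> 1 \<le> int i \<and> int i \<le> kx n k r - kx n k (r+1)}
   \<union> {int a + (int i - 1) * int c | i. 1 \<le> i \<and> i \<le> k 1}
   \<union> {int i * int c | r i. 1 \<le> r \<and> r \<le> n \<and> 1 \<le> i \<and> i \<le> k r}
   \<union> {int c | r i. 1 \<le> r \<and> r \<le> n \<and> 1 \<le> i \<and> i \<le> k r}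
   \<union> {int p + (int i - kx n k (r-1) - 1) * int c | r i. 2 \<le> r \<and> r \<le> n \<and> 1 \<le> i \<and> i \<le> k r}"

definition admissible :: "nat \<Rightarrow> nat \<Rightarrow> (nat \<Rightarrow> nat) \<Rightarrow> nat \<Rightarrow> (nat \<Rightarrow> nat) \<Rightarrow> nat \<Rightarrow> bool" where
  "admissible p n k a b c \<longleftrightarrow>
     int a + (int (k 1) - 1) * int c < int p - 1 \<and>
     (\<forall>x \<in> fact_args p n k a b c. 0 \<le> x \<and> x < int p)"

end

theory Submission
  imports Defs
begin

text \<open>Both bounds are the condition \<open>0 \<le> x\<close> for the argument
  \<open>x = 1 + a_s + b_s + (k_s - k_(s-1) - 1) c - \<delta>_(s,1) p\<close> of the denominator factorial
  with \<open>r = s\<close> and \<open>i = 1\<close>; that factor is present since \<open>k_s - k_(s+1) \<ge> 1\<close>.\<close>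

lemma kx_diff_Suc_ge_1:
  assumes pos: "\<forall>i. 1 \<le> i \<and> i \<le> n \<longrightarrow> 0 < k i"
    and decr: "\<forall>i. 1 \<le> i \<and> i < n \<longrightarrow> k (i+1) < k i"
    and s: "1 \<le> s" "s \<le> n"
  shows "1 \<le> kx n k s - kx n k (s+1)"
proof (cases "s < n")
  case True
  then have "k (s+1) < k s" using decr s by blast
  then show ?thesis using True s by (simp add: kx_def)
next
  case False
  have "0 < k s" using pos s by blast
  then show ?thesis using False s by (simp add: kx_def)
qed

lemma diagonal_denominator_arg_in_fact_args:
  assumes "1 \<le> s" "s \<le> n" "1 \<le> kx n k s - kx n k (s+1)"
  shows "1 + ax a s + int (b s) + (kx n k s - kx n k (s-1) - 1) * int c
           - (if s = 1 then int p else 0) \<in> fact_args p n k a b c"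
proof -
  have "int s - int s + 1 + ax a s + bsum b s s
          + (int 1 + int s - int s + kx n k s - kx n k (s-1) - 2) * int c
          - (if s = 1 then int p else 0) \<in> fact_args p n k a b c"
    unfolding fact_args_def \<comment> \<open>second of the six sets, with \<open>r = s\<close> and \<open>i = 1\<close>\<close>
    by (rule UnI1, rule UnI1, rule UnI1, rule UnI1, rule UnI2, rule CollectI,
        rule exI[of _ s], rule exI[of _ s], rule exI[of _ 1]) (use assms in simp)
  then show ?thesis by (simp add: bsum_def)
qed

lemma admissible_diagonal_denominator_arg_nonneg:
  assumes "\<forall>i. 1 \<le> i \<and> i \<le> n \<longrightarrow> 0 < k i"
    and "\<forall>i. 1 \<le> i \<and> i < n \<longrightarrow> k (i+1) < k i"
    and "admissible p n k a b c"
    and "1 \<le> s" "s \<le> n"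
  shows "0 \<le> 1 + ax a s + int (b s) + (kx n k s - kx n k (s-1) - 1) * int c
           - (if s = 1 then int p else 0)"
  using assms diagonal_denominator_arg_in_fact_args[OF _ _ kx_diff_Suc_ge_1]
  unfolding admissible_def by blast

theorem lemma3p2:
  fixes p n a c :: nat and k b :: "nat \<Rightarrow> nat"
  assumes "prime p" and "odd p"
    and "1 \<le> n"
    and "\<forall>i. 1 \<le> i \<and> i \<le> n \<longrightarrow> 0 < k i"
    and "\<forall>i. 1 \<le> i \<and> i < n \<longrightarrow> k (i+1) < k i"
    and "0 < a" and "0 < c"
    and "\<forall>i. 1 \<le> i \<and> i \<le> n \<longrightarrow> 0 < b i"
    and "admissible p n k a b c"
  shows "int (b 1) \<ge> int p - 1 - (int a + (int (k 1) - 1) * int c)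
    \<and> (\<forall>s. 2 \<le> s \<and> s \<le> n \<longrightarrow>
          int (b s) \<ge> (kx n k (s-1) - kx n k s + 1) * int c - 1)"
proof
  note nonneg = admissible_diagonal_denominator_arg_nonneg[OF assms(4,5,9)]
  have "kx n k 1 = int (k 1)" "kx n k 0 = 0"
    using assms(3) by (auto simp: kx_def)
  then show "int (b 1) \<ge> int p - 1 - (int a + (int (k 1) - 1) * int c)"
    using nonneg[of 1] assms(3) by (simp add: ax_def algebra_simps)
  show "\<forall>s. 2 \<le> s \<and> s \<le> n \<longrightarrow> int (b s) \<ge> (kx n k (s-1) - kx n k s + 1) * int c - 1"
  proof (intro allI impI)
    fix s assume "2 \<le> s \<and> s \<le> n"
    then show "int (b s) \<ge> (kx n k (s-1) - kx n k s + 1) * int c - 1"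
      using nonneg[of s] by (simp add: ax_def algebra_simps)
  qed
qed

end
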